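(* In the model described in the context, there exist choices of the model primitives (group fractions $\lambda_0,\lambda_1$, densities $f_{e,s}$ satisfying the monotone likelihood ratio property, $v_q,v_u,\omega>0$, and $\underline c<\bar c$) for which there is an equilibrium under the color-blind policy, $(\tilde\theta_0,\tilde\theta_1,\pi_0,\pi_1)$ with $\tilde\theta_0=\tilde\theta_1$, such that $\pi_0\neq\pi_1$.
   Context: Two groups $s\in\{0,1\}$ with population fractions $\lambda_1\in(0,1)$, $\lambda_0=1-\lambda_1$. Each applicant draws a cost $c$ uniformly on $[\underline c,\bar c]$ and chooses effort $e\in\{q,u\}$. A classifier score $\theta\in\mathbb{R}$ has density $f_{e,s}$ and distribution function $F_{e,s}$ given effort $e$ and group $s$; monotone likelihood ratio property: $f_{q,s}(\theta)/f_{u,s}(\theta)$ strictly increasing in $\theta$ for each $s$. Firm gains $v_q>0$ per accepted qualified applicant and loses $v_u>0$ per accepted unqualified one; $r=v_q/v_u$; accepted applicants get $\omega>0$. Let $\tilde c_s(\theta)=\omega[F_{u,s}(\theta)-F_{q,s}(\theta)]$ and $G(c)=\min\!\left(1,\frac{c-\underline c}{\bar c-\underline c}\right)$. An equilibrium under the color-blind (CB) policy is a quadruple $(\tilde\theta_0,\tilde\theta_1,\pi_0,\pi_1)$ with $\tilde\theta:=\tilde\theta_0=\tilde\theta_1$, $\pi_s=G(\tilde c_s(\tilde\theta))$ for $s=0,1$, and $$\lambda_0\pi_0+\lambda_1\pi_1=\frac{\phi(\tilde\theta)}{r+\phi(\tilde\theta)},\qquad \phi(\theta)=\frac{\lambda_0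 f_{u,0}(\theta)+\lambda_1 f_{u,1}(\theta)}{\lambda_0 f_{q,0}(\theta)+\lambda_1 f_{q,1}(\theta)}.$$ *)

theory Defs
  imports "HOL-Analysis.Analysis"
begin

datatype effort = Qual | Unqual

definition is_density :: "(real \<Rightarrow> real) \<Rightarrow> bool" where
  "is_density f \<longleftrightarrow> f \<in> borel_measurable lborel \<and> (\<forall>x. 0 \<le> f x)
     \<and> integrable lborel f \<and> integral\<^sup>L lborel f = 1"

definition cdf :: "(real \<Rightarrow> real) \<Rightarrow> real \<Rightarrow> real" where
  "cdf f \<theta> = (LINT x:{..\<theta>}|lborel. f x)"

text \<open>Monotone likelihood ratio property for group s (f_u positive so the ratio is defined).\<close>
definition MLRP :: "(effort \<Rightarrow> nat \<Rightarrow> real \<Rightarrow> real) \<Rightarrow> nat \<Rightarrow> bool" where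
  "MLRP f s \<longleftrightarrow> (\<forall>\<theta>. f Unqual s \<theta> > 0) \<and> strict_mono (\<lambda>\<theta>. f Qual s \<theta> / f Unqual s \<theta>)"

definition Gcost :: "real \<Rightarrow> real \<Rightarrow> real \<Rightarrow> real" where
  "Gcost clo chi c = min 1 ((c - clo) / (chi - clo))"

definition ctilde :: "(effort \<Rightarrow> nat \<Rightarrow> real \<Rightarrow> real) \<Rightarrow> real \<Rightarrow> nat \<Rightarrow> real \<Rightarrow> real" where
  "ctilde f \<omega> s \<theta> = \<omega> * (cdf (f Unqual s) \<theta> - cdf (f Qual s) \<theta>)"

definition phi :: "real \<Rightarrow> (effort \<Rightarrow> nat \<Rightarrow> real \<Rightarrow> real) \<Rightarrow> real \<Rightarrow> real" where
  "phi lam1 f \<theta> = ((1 - lam1) * f Unqual 0 \<theta> + lam1 * f Unqual 1 \<theta>)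
                 / ((1 - lam1) * f Qual 0 \<theta> + lam1 * f Qual 1 \<theta>)"

definition CB_equilibrium ::
  "real \<Rightarrow> (effort \<Rightarrow> nat \<Rightarrow> real \<Rightarrow> real) \<Rightarrow> real \<Rightarrow> real \<Rightarrow> real \<Rightarrow> real \<Rightarrow> real
   \<Rightarrow> real \<Rightarrow> real \<Rightarrow> real \<Rightarrow> real \<Rightarrow> bool" where
  "CB_equilibrium lam1 f vq vu \<omega> clo chi \<theta>0 \<theta>1 \<pi>0 \<pi>1 \<longleftrightarrow>
     \<theta>0 = \<theta>1
     \<and> \<pi>0 = Gcost clo chi (ctilde f \<omega> 0 \<theta>0)
     \<and> \<pi>1 = Gcost clo chi (ctilde f \<omega> 1 \<theta>0)
     \<and> (1 - lam1) * \<pi>0 + lam1 * \<pi>1 = phi lam1 f \<theta>0 / (vq / vu + phi lam1 f \<theta>0)"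

end

theory Submission imports Defs begin

text \<open>
  Take logistic score distributions: the unqualified applicants of both groups have distribution
  function \<open>\<sigma>\<close>, the qualified ones of group \<open>s\<close> have \<open>\<sigma>\<^sup>k\<close> with \<open>k = s + 2\<close>, where
  \<open>\<sigma>(x) = 1/(1 + e\<^sup>-\<^sup>x)\<close>. The likelihood ratio \<open>k \<sigma>\<^sup>k\<^sup>-\<^sup>1\<close> is strictly increasing, so MLRP holds.
  At the common threshold \<open>0\<close>, where \<open>\<sigma> = 1/2\<close>, the benefit of effort is \<open>1/2 - 1/4\<close> in group 0
  but \<open>1/2 - 1/8\<close> in group 1; with costs uniform on \<open>[0,1]\<close> and \<open>\<omega> = 1\<close> these are the
  investment rates \<open>\<pi>\<^sub>0 = 1/4 \<noteq> 3/8 = \<pi>\<^sub>1\<close>. The firm's indifference condition at \<open>0\<close> then only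
  fixes the ratio \<open>v\<^sub>q/v\<^sub>u\<close>, which comes out as \<open>88/35\<close>.
\<close>

lemma
  fixes F f :: "real \<Rightarrow> real"
  assumes deriv: "\<And>x. (F has_real_derivative f x) (at x)"
    and cont: "\<And>x. isCont f x"
    and nonneg: "\<And>x. 0 \<le> f x"
    and at_bot: "(F \<longlongrightarrow> 0) at_bot"
    and at_top: "(F \<longlongrightarrow> 1) at_top"
  shows is_density_of_antiderivative: "is_density f"
    and cdf_eq_antiderivative: "cdf f t = F t"
proof -
  have measurable [measurable]: "f \<in> borel_measurable lborel"
    by (auto intro!: borel_measurable_continuous_onI continuous_at_imp_continuous_on cont)
  have lower: "((F \<circ> real_of_ereal) \<longlongrightarrow> 0) (at_right (- \<infinity>))"
    using at_bot by (simp add: ereal_tendsto_simps1)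
  have upper: "((F \<circ> real_of_ereal) \<longlongrightarrow> 1) (at_left \<infinity>)"
    using at_top by (simp add: ereal_tendsto_simps1)
  have at_t: "((F \<circ> real_of_ereal) \<longlongrightarrow> F t) (at_left (ereal t))"
    unfolding ereal_tendsto_simps1
    using DERIV_isCont[OF deriv] by (simp add: isCont_def filterlim_at_split)
  note FTC_UNIV = interval_integral_FTC_nonneg[of "- \<infinity>" "\<infinity>" F f 0 1,
      OF _ deriv cont _ lower upper]
  note FTC_below_t = interval_integral_FTC_nonneg[of "- \<infinity>" "ereal t" F f 0 "F t",
      OF _ deriv cont _ lower at_t]
  show "is_density f"
    using FTC_UNIV nonneg unfolding is_density_def
    by (auto simp: interval_lebesgue_integral_def
        set_integrable_def set_lebesgue_integral_def)
  have "einterval (- \<infinity>) (ereal t) = {..<t}"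
    by (auto simp: einterval_def)
  then have "(LINT x:{..<t}|lborel. f x) = F t"
    using FTC_below_t nonneg by (simp add: interval_lebesgue_integral_def)
  moreover have "(LINT x:{..t}|lborel. f x) = (LINT x:{..<t}|lborel. f x)"
    by (rule set_integral_cong_set) (auto simp: set_borel_measurable_def
        intro: eventually_mono[OF AE_lborel_singleton[of t]])
  ultimately show "cdf f t = F t"
    unfolding cdf_def by simp
qed

definition logistic :: "real \<Rightarrow> real" where
  "logistic x = 1 / (1 + exp (- x))"

definition logistic_power_density :: "nat \<Rightarrow> real \<Rightarrow> real" where
  "logistic_power_density k x = real k * logistic x ^ k * (1 - logistic x)"

lemma one_add_exp_pos: "0 < 1 + exp (x :: real)"
  by (simp add: add_pos_pos)

lemma logistic_pos: "0 < logistic x"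
  unfolding logistic_def using one_add_exp_pos by simp

lemma logistic_less_one: "logistic x < 1"
  unfolding logistic_def by (simp add: add_pos_pos)

lemma logistic_zero [simp]: "logistic 0 = 1 / 2"
  unfolding logistic_def by simp

lemma strict_mono_logistic: "strict_mono logistic"
proof (rule strict_monoI)
  fix x y :: real
  assume "x < y"
  then have "exp (- y) < exp (- x)" by simp
  then show "logistic x < logistic y"
    unfolding logistic_def by (simp add: add_pos_pos divide_strict_left_mono)
qed

lemma logistic_has_real_derivative:
  "(logistic has_real_derivative logistic x * (1 - logistic x)) (at x)"
proof -
  have nz: "1 + exp (- x) \<noteq> 0"
    using one_add_exp_pos[of "- x"] by linarith
  have "(logistic has_real_derivative exp (- x) / (1 + exp (- x))\<^sup>2) (at x)"
    unfolding logistic_def by (auto intro!: derivative_eq_intros simp: nz power2_eq_square)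
  also have "exp (- x) / (1 + exp (- x))\<^sup>2 = logistic x * (1 - logistic x)"
    unfolding logistic_def using nz by (simp add: field_simps power2_eq_square)
  finally show ?thesis .
qed

lemma tendsto_logistic_at_bot: "(logistic \<longlongrightarrow> 0) at_bot"
  unfolding logistic_def by real_asymp

lemma tendsto_logistic_at_top: "(logistic \<longlongrightarrow> 1) at_top"
  unfolding logistic_def by real_asymp

lemma logistic_power_has_real_derivative:
  "((\<lambda>x. logistic x ^ k) has_real_derivative logistic_power_density k x) (at x)"
proof -
  have "((\<lambda>x. logistic x ^ k) has_real_derivative
          real k * (logistic x * (1 - logistic x) * logistic x ^ (k - Suc 0))) (at x)"
    by (rule DERIV_power[OF logistic_has_real_derivative])
  also have "real k * (logistic x * (1 - logistic x) * logistic x ^ (k - Suc 0))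
             = logistic_power_density k x"
    unfolding logistic_power_density_def by (cases k) auto
  finally show ?thesis .
qed

lemma isCont_logistic_power_density: "isCont (logistic_power_density k) x"
  unfolding logistic_power_density_def logistic_def
  by (intro continuous_intros) (metis one_add_exp_pos less_irrefl)+

lemma logistic_power_density_pos: "0 < k \<Longrightarrow> 0 < logistic_power_density k x"
  unfolding logistic_power_density_def by (simp add: logistic_pos logistic_less_one)

lemma logistic_power_density_ratio:
  "logistic_power_density k x / logistic_power_density 1 x = real k * logistic x ^ (k - 1)"
  using logistic_pos[of x] logistic_less_one[of x]
  unfolding logistic_power_density_def by (cases k) auto

lemma strict_mono_logistic_power_density_ratio:
  assumes "2 \<le> k"
  shows "strict_mono (\<lambda>x. logistic_power_density k x / logistic_power_density 1 x)"
  unfolding logistic_power_density_ratio using assms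
  by (auto intro!: strict_monoI power_strict_mono strict_monoD[OF strict_mono_logistic]
           simp: less_imp_le[OF logistic_pos])

lemma tendsto_logistic_power_at_bot: "0 < k \<Longrightarrow> ((\<lambda>x. logistic x ^ k) \<longlongrightarrow> 0) at_bot"
  using tendsto_power[OF tendsto_logistic_at_bot, of k] by (metis zero_power)

lemma tendsto_logistic_power_at_top: "((\<lambda>x. logistic x ^ k) \<longlongrightarrow> 1) at_top"
  using tendsto_power[OF tendsto_logistic_at_top, of k] by simp

lemma
  assumes "0 < k"
  shows is_density_logistic_power_density: "is_density (logistic_power_density k)"
    and cdf_logistic_power_density: "cdf (logistic_power_density k) t = logistic t ^ k"
  using is_density_of_antiderivative cdf_eq_antiderivative
    logistic_power_has_real_derivative isCont_logistic_power_density
    less_imp_le[OF logistic_power_density_pos[OF assms]]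
    tendsto_logistic_power_at_bot[OF assms] tendsto_logistic_power_at_top
  by blast+

definition logistic_scores :: "effort \<Rightarrow> nat \<Rightarrow> real \<Rightarrow> real" where
  "logistic_scores e s = (case e of
     Unqual \<Rightarrow> logistic_power_density 1
   | Qual \<Rightarrow> logistic_power_density (s + 2))"

lemma is_density_logistic_scores: "is_density (logistic_scores e s)"
  by (cases e) (simp_all add: logistic_scores_def is_density_logistic_power_density)

lemma MLRP_logistic_scores: "MLRP logistic_scores s"
  using strict_mono_logistic_power_density_ratio[of "s + 2"]
  unfolding MLRP_def logistic_scores_def by (simp add: logistic_power_density_pos)

lemma ctilde_logistic_scores_at_zero:
  "ctilde logistic_scores \<omega> s 0 = \<omega> * (1 / 2 - (1 / 2) ^ (s + 2))"
  unfolding ctilde_def logistic_scores_def by (simp add: cdf_logistic_power_density)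

lemma phi_logistic_scores_at_zero: "phi (1 / 2) logistic_scores 0 = 8 / 7"
  unfolding phi_def logistic_scores_def logistic_power_density_def by simp

theorem proposition2:
  shows "\<exists>(lam1::real) (f::effort \<Rightarrow> nat \<Rightarrow> real \<Rightarrow> real) (vq::real) (vu::real) (\<omega>::real)
            (clo::real) (chi::real) (\<theta>0::real) (\<theta>1::real) (\<pi>0::real) (\<pi>1::real).
           0 < lam1 \<and> lam1 < 1
         \<and> (\<forall>e. \<forall>s\<in>{0,1}. is_density (f e s))
         \<and> (\<forall>s\<in>{0,1}. MLRP f s)
         \<and> 0 < vq \<and> 0 < vu \<and> 0 < \<omega> \<and> clo < chi
         \<and> CB_equilibrium lam1 f vq vu \<omega> clo chi \<theta>0 \<theta>1 \<pi>0 \<pi>1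
         \<and> \<pi>0 \<noteq> \<pi>1"
proof -
  have equilibrium: "CB_equilibrium (1 / 2) logistic_scores 88 35 1 0 1 0 0 (1 / 4) (3 / 8)"
    unfolding CB_equilibrium_def Gcost_def ctilde_logistic_scores_at_zero
      phi_logistic_scores_at_zero by simp
  show ?thesis
    by (rule exI[of _ "1 / 2"], rule exI[of _ logistic_scores], rule exI[of _ 88],
        rule exI[of _ 35], rule exI[of _ 1], rule exI[of _ 0], rule exI[of _ 1],
        rule exI[of _ 0], rule exI[of _ 0], rule exI[of _ "1 / 4"], rule exI[of _ "3 / 8"])
       (simp add: equilibrium is_density_logistic_scores MLRP_logistic_scores)
qed

end
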